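(* For every $\varepsilon>0$ there exists $\eta>0$ such that the following holds for all $C\ge12/\varepsilon$. Every $(\varepsilon,C)$-rich graph $G$ on $\{0,1\}^d$ contains a fundamental interval $I$ (at some level $a<d$), a vertex $x\in\mathrm{lhs}(I)$, and a subgraph $G'$ of $G[\mathrm{rhs}(I)]$ such that $G'$ is $(\eta,\varepsilon C/24)$-rich and the larger vertex of every edge of $G'$ lies in $N^+(x)$.
   Context: For distinct $x,y\in\{0,1\}^d$, $\delta(x,y)=\min\{i:x_i\ne y_i\}$; $\{0,1\}^d$ is ordered lexicographically ($x<y$ iff $x_{\delta(x,y)}=0$). For a graph $G$ on $\{0,1\}^d$, a level-$\ell$ edge is an edge $uv$ with $\delta(u,v)=\ell$, $e_\ell(G)$ counts them, $\tau_{\ell,d}=2^{2d-\ell-1}$, a level $\ell\in[d]$ is $\alpha$-rich if $e_\ell(G)\ge\alpha\tau_{\ell,d}$, and $G$ is $(\alpha,C)$-rich if at least $C$ levels are $\alpha$-rich. For $a\in\{0,\dots,d\}$, the fundamental intervals at level $a$ are the classes of strings in $\{0,1\}^d$ agreeing in their first $a$ coordinates. For such an interval $I$ with $a<d$, $\mathrm{lhs}(I)$ (resp. $\mathrm{rhs}(I)$) is the set of strings of $I$ whose $(a+1)$-th coordinate is $0$ (resp. $1$). A graph on $\mathrm{rhs}(I)$ is regarded as a graph on $\{0,1\}^{d-a-1}$ by deleting the first $a+1$ (constant) coordinates, and richness of $G'$ is understood via this identification. $N^+(x)$ is the set of forward neighbours of $x$ in $G$, i.e. vertices $v>x$ with $xv\in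 E(G)$. *)

theory Defs
  imports Complex_Main
begin

text \<open>Binary strings in \<open>{0,1}^d\<close> are represented as \<open>bool list\<close>s of length d
  (False = 0, True = 1); the paper's coordinate i (1-based) is list index i - 1.\<close>

definition cube :: "nat \<Rightarrow> bool list set" where
  "cube d = {x. length x = d}"

definition delta :: "bool list \<Rightarrow> bool list \<Rightarrow> nat" where
  "delta x y = Suc (LEAST i. i < length x \<and> x ! i \<noteq> y ! i)"

definition lex_less :: "bool list \<Rightarrow> bool list \<Rightarrow> bool" where
  "lex_less x y \<longleftrightarrow> length x = length y \<and>
     (\<exists>i < length x. take i x = take i y \<and> \<not> x ! i \<and> y ! i)"

definition graph_on :: "nat \<Rightarrow> bool list set set \<Rightarrow> bool" where
  "graph_on d E \<longleftrightarrow> (\<forall>e\<in>E. \<exists>u v. e = {u, v} \<and> u \<noteq> v \<and> u \<in> cube d \<and> v \<in> cube d)"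

definition level_edges :: "bool list set set \<Rightarrow> nat \<Rightarrow> bool list set set" where
  "level_edges E l = {e \<in> E. \<exists>u v. e = {u, v} \<and> u \<noteq> v \<and> delta u v = l}"

definition e_level :: "bool list set set \<Rightarrow> nat \<Rightarrow> nat" where
  "e_level E l = card (level_edges E l)"

definition tau :: "nat \<Rightarrow> nat \<Rightarrow> real" where
  "tau l d = 2 ^ (2 * d - l - 1)"

definition rich_level :: "real \<Rightarrow> nat \<Rightarrow> bool list set set \<Rightarrow> nat \<Rightarrow> bool" where
  "rich_level \<alpha> d E l \<longleftrightarrow> real (e_level E l) \<ge> \<alpha> * tau l d"

definition rich :: "real \<Rightarrow> real \<Rightarrow> nat \<Rightarrow> bool list set set \<Rightarrow> bool" where
  "rich \<alpha> C d E \<longleftrightarrow> real (card {l \<in> {1..d}. rich_level \<alpha> d E l}) \<ge> C"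

definition fund_interval :: "nat \<Rightarrow> nat \<Rightarrow> bool list \<Rightarrow> bool list set" where
  "fund_interval d a p = {x \<in> cube d. take a x = p}"

definition lhs :: "nat \<Rightarrow> nat \<Rightarrow> bool list \<Rightarrow> bool list set" where
  "lhs d a p = {x \<in> fund_interval d a p. x ! a = False}"

definition rhs :: "nat \<Rightarrow> nat \<Rightarrow> bool list \<Rightarrow> bool list set" where
  "rhs d a p = {x \<in> fund_interval d a p. x ! a = True}"

definition fwd_nbrs :: "bool list set set \<Rightarrow> bool list \<Rightarrow> bool list set" where
  "fwd_nbrs E x = {v. lex_less x v \<and> {x, v} \<in> E}"

text \<open>Identification of a graph on rhs(I) with a graph on \<open>{0,1}^(d-a-1)\<close>:
  delete the first k = a+1 coordinates.\<close>
definition shift_graph :: "nat \<Rightarrow> bool list set set \<Rightarrow> bool list set set" where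
  "shift_graph k E = (\<lambda>e. drop k ` e) ` E"

end

theory Submission
  imports Defs
begin

(*
  For a vertex v and a level l, the density of l at v is the fraction of the 2^(d-l) potential
  backward neighbours of v across level l that are present; l is dense at v if this fraction is
  at least \<epsilon>/4. Since the \<epsilon>-rich levels R carry many edges, a vertex has on average at
  least \<epsilon>|R|/4 dense levels. Call l > k good for (x, k) if the forward neighbours of x across k
  at which l is dense make up an \<epsilon>^3/400 fraction of rhs(I), for I the fundamental interval of
  x at level k - 1. By double counting, pairs k < l dense at v with l not good for some backward
  neighbour x of v across k are rare; by convexity, the pairs of dense levels are not. Hence some
  v, k and x have more than \<epsilon>|R|/24 good levels l. Each forward neighbour of x counted for l
  has at least \<epsilon>/4 2^(d-l) backward neighbours across l, so the edges of level l below forward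
  neighbours of x form a graph on rhs(I) with at least \<epsilon>^4/800 tau edges at level l - k.
*)

definition lex_less_at :: "bool list \<Rightarrow> bool list \<Rightarrow> nat \<Rightarrow> bool" where
  "lex_less_at u v l \<longleftrightarrow> length u = length v \<and> 1 \<le> l \<and> l \<le> length v \<and>
     take (l - 1) u = take (l - 1) v \<and> \<not> u ! (l - 1) \<and> v ! (l - 1)"

lemma delta_eqI:
  assumes "length u = length v" "i < length u" "take i u = take i v" "u ! i \<noteq> v ! i"
  shows "delta u v = Suc i"
proof -
  have "(LEAST j. j < length u \<and> u ! j \<noteq> v ! j) = i"
  proof (rule Least_equality)
    fix j assume "j < length u \<and> u ! j \<noteq> v ! j"
    then show "i \<le> j" using assms by (metis not_le nth_take)
  qed (use assms in auto)
  then show ?thesis unfolding delta_def by simp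
qed

lemma lex_less_at_iff: "lex_less_at u v l \<longleftrightarrow> lex_less u v \<and> delta u v = l"
proof
  assume l: "lex_less_at u v l"
  then have "delta u v = Suc (l - 1)"
    unfolding lex_less_at_def by (intro delta_eqI) auto
  moreover have "lex_less u v"
    using l unfolding lex_less_at_def lex_less_def by (intro conjI exI[of _ "l - 1"]) auto
  ultimately show "lex_less u v \<and> delta u v = l"
    using l unfolding lex_less_at_def by auto
next
  assume "lex_less u v \<and> delta u v = l"
  then obtain i where i: "length u = length v" "i < length u" "take i u = take i v"
      "\<not> u ! i" "v ! i" and "delta u v = l"
    unfolding lex_less_def by auto
  moreover have "delta u v = Suc i" using i by (intro delta_eqI) auto
  ultimately show "lex_less_at u v l" unfolding lex_less_at_def by auto
qed

lemma lex_less_at_cases: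
  assumes "length u = length v" "u \<noteq> v"
  shows "lex_less_at u v (delta u v) \<or> lex_less_at v u (delta u v)"
proof -
  define P where "P j \<longleftrightarrow> j < length u \<and> u ! j \<noteq> v ! j" for j
  define i where "i = Least P"
  obtain j where "P j" using assms nth_equalityI unfolding P_def by blast
  then have i: "i < length u" "u ! i \<noteq> v ! i" using LeastI[of P j] unfolding i_def P_def by auto
  have "u ! j = v ! j" if "j < i" for j
    using not_less_Least[of j P] that i unfolding i_def P_def by auto
  with assms i have "take i u = take i v" by (intro nth_equalityI) auto
  moreover have "delta u v = Suc i" unfolding delta_def i_def P_def ..
  ultimately show ?thesis using assms i unfolding lex_less_at_def by (cases "u ! i") auto
qed

lemma lex_less_at_imp_neq: "lex_less_at u v l \<Longrightarrow> u \<noteq> v"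
  unfolding lex_less_at_def by auto

lemma take_eq_if_lex_less_at:
  assumes "lex_less_at u v l" "k < l"
  shows "take k u = take k v"
proof -
  have "take (l - 1) u = take (l - 1) v" using assms unfolding lex_less_at_def by auto
  then have "take k (take (l - 1) u) = take k (take (l - 1) v)" by simp
  with assms(2) show ?thesis by (simp add: min_absorb1)
qed

lemma lex_less_at_asym:
  assumes l: "lex_less_at u v l"
  shows "\<not> lex_less_at v u l'"
proof
  assume l': "lex_less_at v u l'"
  have u: "1 \<le> l" "\<not> u ! (l - 1)" "v ! (l - 1)" and v: "1 \<le> l'" "\<not> v ! (l' - 1)" "u ! (l' - 1)"
    using l l' unfolding lex_less_at_def by auto
  consider "l < l'" | "l' < l" | "l = l'" by linarith
  then show False
  proof cases
    case 1
    then have "take l v ! (l - 1) = take l u ! (l - 1)"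
      using take_eq_if_lex_less_at[OF l'] by simp
    with u show False by (simp add: nth_take)
  next
    case 2
    then have "take l' u ! (l' - 1) = take l' v ! (l' - 1)"
      using take_eq_if_lex_less_at[OF l] by simp
    with v show False by (simp add: nth_take)
  qed (use u v in simp)
qed

lemma take_lex_less_at:
  assumes "lex_less_at u v l"
  shows "take l u = take (l - 1) v @ [False]" "take l v = take (l - 1) u @ [True]"
proof -
  obtain i where "l = Suc i" using assms unfolding lex_less_at_def by (cases l) auto
  with assms show "take l u = take (l - 1) v @ [False]" "take l v = take (l - 1) u @ [True]"
    unfolding lex_less_at_def by (simp_all add: take_Suc_conv_app_nth)
qed

lemma lex_less_at_drop:
  assumes "lex_less_at u v l" "k < l" "take k u = take k v"
  shows "lex_less_at (drop k u) (drop k v) (l - k)"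
proof -
  have "take (l - k - 1) (drop k u) = drop k (take (l - 1) u)"
    "take (l - k - 1) (drop k v) = drop k (take (l - 1) v)"
    using assms(2) by (simp_all add: drop_take)
  with assms show ?thesis unfolding lex_less_at_def by (auto simp: Suc_diff_Suc)
qed

lemma finite_cube: "finite (cube n)"
  using finite_lists_length_eq[of "UNIV :: bool set" n] by (simp add: cube_def)

lemma card_cube: "card (cube n) = 2 ^ n"
  using card_lists_length_eq[of "UNIV :: bool set" n] by (simp add: cube_def)

definition back_nbrs :: "bool list set set \<Rightarrow> nat \<Rightarrow> bool list \<Rightarrow> bool list set" where
  "back_nbrs E l v = {u. {u, v} \<in> E \<and> lex_less_at u v l}"

lemma back_nbrs_subset_cube: "back_nbrs E l v \<subseteq> cube (length v)"
  unfolding back_nbrs_def lex_less_at_def cube_def by auto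

lemma finite_back_nbrs: "finite (back_nbrs E l v)"
  using finite_subset[OF back_nbrs_subset_cube finite_cube] .

lemma card_back_nbrs_le: "card (back_nbrs E l v) \<le> 2 ^ (length v - l)"
proof -
  have "inj_on (drop l) (back_nbrs E l v)"
  proof (rule inj_onI)
    fix u u' assume "u \<in> back_nbrs E l v" "u' \<in> back_nbrs E l v" and drop: "drop l u = drop l u'"
    then have "take l u = take l u'" unfolding back_nbrs_def using take_lex_less_at(1) by auto
    with drop show "u = u'" by (metis append_take_drop_id)
  qed
  moreover have "drop l ` back_nbrs E l v \<subseteq> cube (length v - l)"
    using back_nbrs_subset_cube by (fastforce simp: cube_def)
  ultimately have "card (back_nbrs E l v) \<le> card (cube (length v - l))"
    using card_inj_on_le finite_cube by blast
  then show ?thesis by (simp add: card_cube)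
qed

lemma graph_on_memD:
  assumes "graph_on d E" "{u, v} \<in> E"
  shows "u \<in> cube d" "v \<in> cube d" "u \<noteq> v"
proof -
  obtain u' v' where "{u, v} = {u', v'}" "u' \<noteq> v'" "u' \<in> cube d" "v' \<in> cube d"
    using assms unfolding graph_on_def by blast
  then show "u \<in> cube d" "v \<in> cube d" "u \<noteq> v" by (auto simp: doubleton_eq_iff)
qed

lemma level_edges_eq_image:
  assumes "graph_on d E"
  shows "level_edges E l = (\<lambda>(v, u). {u, v}) ` Sigma (cube d) (back_nbrs E l)"
proof
  show "level_edges E l \<subseteq> (\<lambda>(v, u). {u, v}) ` Sigma (cube d) (back_nbrs E l)"
  proof
    fix e assume "e \<in> level_edges E l"
    then obtain u v where e: "e = {u, v}" "{u, v} \<in> E" "u \<noteq> v" "delta u v = l"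
      unfolding level_edges_def by blast
    then have c: "u \<in> cube d" "v \<in> cube d" using graph_on_memD[OF assms] by auto
    then have "lex_less_at u v l \<or> lex_less_at v u l"
      using lex_less_at_cases[of u v] e by (auto simp: cube_def)
    then show "e \<in> (\<lambda>(v, u). {u, v}) ` Sigma (cube d) (back_nbrs E l)"
    proof
      assume "lex_less_at u v l"
      with c e show ?thesis unfolding back_nbrs_def by (auto intro!: image_eqI[where x = "(v, u)"])
    next
      assume "lex_less_at v u l"
      with c e show ?thesis unfolding back_nbrs_def
        by (auto simp: insert_commute intro!: image_eqI[where x = "(u, v)"])
    qed
  qed
next
  show "(\<lambda>(v, u). {u, v}) ` Sigma (cube d) (back_nbrs E l) \<subseteq> level_edges E l"
  proof clarify
    fix v u assume "u \<in> back_nbrs E l v"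
    then have "{u, v} \<in> E" "u \<noteq> v" "delta u v = l"
      unfolding back_nbrs_def using lex_less_at_iff lex_less_at_imp_neq by auto
    then show "{u, v} \<in> level_edges E l" unfolding level_edges_def by blast
  qed
qed

lemma inj_on_edge_back_nbrs: "inj_on (\<lambda>(v, u). {u, v}) (Sigma A (back_nbrs E l))"
proof (rule inj_onI, clarify)
  fix v u v' u'
  assume "u \<in> back_nbrs E l v" "u' \<in> back_nbrs E l v'" and e: "{u, v} = {u', v'}"
  then have l: "lex_less_at u v l" "lex_less_at u' v' l" unfolding back_nbrs_def by auto
  show "v = v' \<and> u = u'"
  proof (cases "u = u'")
    case True
    with e lex_less_at_imp_neq[OF l(1)] show ?thesis by (auto simp: doubleton_eq_iff)
  next
    case False
    with e have "u = v'" "v = u'" by (auto simp: doubleton_eq_iff)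
    with l lex_less_at_asym show ?thesis by blast
  qed
qed

lemma e_level_eq_card_Sigma:
  assumes "graph_on d E"
  shows "e_level E l = card (Sigma (cube d) (back_nbrs E l))"
  unfolding e_level_def level_edges_eq_image[OF assms]
  by (rule card_image[OF inj_on_edge_back_nbrs])

lemma e_level_eq_sum_card_back_nbrs:
  assumes "graph_on d E"
  shows "e_level E l = (\<Sum>v\<in>cube d. card (back_nbrs E l v))"
  using e_level_eq_card_Sigma[OF assms] finite_cube finite_back_nbrs by (simp add: card_SigmaI)

definition fan_subgraph :: "bool list set set \<Rightarrow> bool list \<Rightarrow> nat \<Rightarrow> bool list set set" where
  "fan_subgraph E x k = {{u, v} | u v l. k < l \<and> u \<in> back_nbrs E l v \<and> x \<in> back_nbrs E k v}"

lemma fan_subgraph_subset: "fan_subgraph E x k \<subseteq> E"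
  unfolding fan_subgraph_def back_nbrs_def by auto

lemma fan_subgraph_upper_in_fwd_nbrs:
  assumes "{u', v'} \<in> fan_subgraph E x k" "lex_less u' v'"
  shows "v' \<in> fwd_nbrs E x"
proof -
  obtain u v l where e: "{u', v'} = {u, v}" "lex_less_at u v l" "x \<in> back_nbrs E k v"
    using assms(1) unfolding fan_subgraph_def back_nbrs_def by blast
  have "v' = v"
  proof (rule ccontr)
    assume "v' \<noteq> v"
    with e(1) have "lex_less_at v u (delta v u)"
      using assms(2) lex_less_at_iff by (auto simp: doubleton_eq_iff)
    with e(2) lex_less_at_asym show False by blast
  qed
  with e(3) show ?thesis unfolding back_nbrs_def fwd_nbrs_def lex_less_at_iff by auto
qed

lemma lex_less_at_lower_in_lhs:
  assumes "lex_less_at x v k" "x \<in> cube d"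
  shows "x \<in> lhs d (k - 1) (take (k - 1) x)"
  using assms unfolding lhs_def fund_interval_def lex_less_at_def by auto

lemma rhs_memI:
  assumes "y \<in> cube d" "take (Suc a) y = p @ [True]" "length p = a"
  shows "y \<in> rhs d a p"
proof -
  have "take a y = take a (take (Suc a) y)" by simp
  also have "\<dots> = p" using assms(2,3) by simp
  finally have "take a y = p" .
  moreover have "y ! a = take (Suc a) y ! a" by simp
  moreover have "\<dots> = True" using assms(2,3) by (simp add: nth_append)
  ultimately show ?thesis using assms(1) unfolding rhs_def fund_interval_def by auto
qed

lemma fan_subgraph_in_rhs:
  assumes "graph_on d E" "e \<in> fan_subgraph E x k"
  shows "e \<subseteq> rhs d (k - 1) (take (k - 1) x)"
proof -
  obtain u v l where e: "e = {u, v}" "k < l" "{u, v} \<in> E" "lex_less_at u v l"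
    and x: "lex_less_at x v k"
    using assms(2) unfolding fan_subgraph_def back_nbrs_def by blast
  obtain a where k: "k = Suc a" using x unfolding lex_less_at_def by (cases k) auto
  have "take (Suc a) v = take a x @ [True]" using take_lex_less_at(2)[OF x] k by simp
  moreover have "take (Suc a) u = take (Suc a) v" using take_eq_if_lex_less_at[OF e(4,2)] k by simp
  moreover have "length (take a x) = a" using x k unfolding lex_less_at_def by simp
  moreover note graph_on_memD[OF assms(1) e(3)]
  ultimately have "u \<in> rhs d a (take a x)" "v \<in> rhs d a (take a x)"
    by (simp_all add: rhs_memI)
  with e k show ?thesis by simp
qed

lemma graph_on_shift_fan_subgraph:
  assumes "graph_on d E"
  shows "graph_on (d - k) (shift_graph k (fan_subgraph E x k))"
  unfolding graph_on_def shift_graph_def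
proof
  fix e' assume "e' \<in> (\<lambda>e. drop k ` e) ` fan_subgraph E x k"
  then obtain u v l where e: "e' = {drop k u, drop k v}" "k < l" "{u, v} \<in> E" "lex_less_at u v l"
    unfolding fan_subgraph_def back_nbrs_def by auto
  then have "drop k u \<noteq> drop k v"
    using take_eq_if_lex_less_at lex_less_at_imp_neq by (metis append_take_drop_id)
  with e(1) graph_on_memD[OF assms e(3)]
  show "\<exists>u v. e' = {u, v} \<and> u \<noteq> v \<and> u \<in> cube (d - k) \<and> v \<in> cube (d - k)"
    by (intro exI[of _ "drop k u"] exI[of _ "drop k v"]) (auto simp: cube_def)
qed

lemma drop_back_nbrs_fan_subgraph:
  assumes "k < l" "x \<in> back_nbrs E k v" "u \<in> back_nbrs E l v"
  shows "drop k u \<in> back_nbrs (shift_graph k (fan_subgraph E x k)) (l - k) (drop k v)"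
proof -
  have "{u, v} \<in> fan_subgraph E x k" using assms unfolding fan_subgraph_def by blast
  then have "drop k ` {u, v} \<in> shift_graph k (fan_subgraph E x k)"
    unfolding shift_graph_def by (rule imageI)
  moreover have "lex_less_at (drop k u) (drop k v) (l - k)"
    using assms(1,3) take_eq_if_lex_less_at lex_less_at_drop unfolding back_nbrs_def by blast
  ultimately show ?thesis unfolding back_nbrs_def by simp
qed

lemma sum_card_back_nbrs_le_e_level_fan:
  assumes "graph_on d E" "k < l" "T \<subseteq> {v \<in> cube d. x \<in> back_nbrs E k v}"
  shows "(\<Sum>v\<in>T. card (back_nbrs E l v)) \<le> e_level (shift_graph k (fan_subgraph E x k)) (l - k)"
proof -
  define G where "G = shift_graph k (fan_subgraph E x k)"
  define f :: "bool list \<times> bool list \<Rightarrow> bool list \<times> bool list" where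
    "f = map_prod (drop k) (drop k)"
  have "T \<subseteq> cube d" using assms(3) by auto
  then have "finite T" using finite_cube by (rule finite_subset)
  have take_u: "take k u = take k v" if "u \<in> back_nbrs E l v" for u v
    using that take_eq_if_lex_less_at assms(2) unfolding back_nbrs_def by auto
  have take_v: "take k v = take (k - 1) x @ [True]" if "v \<in> T" for v
    using that assms(3) take_lex_less_at(2) unfolding back_nbrs_def by auto
  have "inj_on f (Sigma T (back_nbrs E l))"
  proof (rule inj_onI, clarify)
    fix v u v' u' assume "v \<in> T" "u \<in> back_nbrs E l v" "v' \<in> T" "u' \<in> back_nbrs E l v'"
      and "f (v, u) = f (v', u')"
    then have "take k v = take k v'" "take k u = take k u'"
      and "drop k v = drop k v'" "drop k u = drop k u'"
      using take_u take_v unfolding f_def by auto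
    then show "v = v' \<and> u = u'" by (metis append_take_drop_id)
  qed
  then have "(\<Sum>v\<in>T. card (back_nbrs E l v)) = card (f ` Sigma T (back_nbrs E l))"
    using \<open>finite T\<close> by (simp add: card_image finite_back_nbrs)
  also have "\<dots> \<le> card (Sigma (cube (d - k)) (back_nbrs G (l - k)))"
  proof (rule card_mono)
    show "finite (Sigma (cube (d - k)) (back_nbrs G (l - k)))"
      using finite_cube finite_back_nbrs by blast
    show "f ` Sigma T (back_nbrs E l) \<subseteq> Sigma (cube (d - k)) (back_nbrs G (l - k))"
      using assms(2,3) drop_back_nbrs_fan_subgraph unfolding f_def G_def
      by (fastforce simp: cube_def)
  qed
  also have "\<dots> = e_level G (l - k)"
    using e_level_eq_card_Sigma graph_on_shift_fan_subgraph[OF assms(1)] unfolding G_def by metis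
  finally show ?thesis unfolding G_def .
qed

lemma rich_if_card_levels:
  fixes C :: real
  assumes "L \<subseteq> {k<..d}" "\<And>l. l \<in> L \<Longrightarrow> rich_level \<alpha> (d - k) G (l - k)" "C \<le> card L"
  shows "rich \<alpha> C (d - k) G"
proof -
  have "inj_on (\<lambda>l. l - k) L" using assms(1) by (intro inj_on_diff_nat) auto
  moreover have "(\<lambda>l. l - k) ` L \<subseteq> {l \<in> {1..d - k}. rich_level \<alpha> (d - k) G l}"
  proof
    fix l' assume "l' \<in> (\<lambda>l. l - k) ` L"
    then obtain l where l: "l \<in> L" "l' = l - k" by blast
    then have "k < l" "l \<le> d" using assms(1) by auto
    with l assms(2) show "l' \<in> {l \<in> {1..d - k}. rich_level \<alpha> (d - k) G l}" by auto
  qed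
  ultimately have "card L \<le> card {l \<in> {1..d - k}. rich_level \<alpha> (d - k) G l}"
    by (intro card_inj_on_le) auto
  with assms(3) show ?thesis unfolding rich_def by linarith
qed

lemma sum_card_greater:
  fixes L :: "'a::linorder set"
  assumes "finite L"
  shows "(\<Sum>k\<in>L. real (card {l \<in> L. k < l})) = real (card L) * (real (card L) - 1) / 2"
  using assms
proof (induction L rule: finite_linorder_max_induct)
  case empty
  then show ?case by simp
next
  case (insert b A)
  then have b: "b \<notin> A" by blast
  have "card {l \<in> insert b A. k < l} = card {l \<in> A. k < l} + 1" if "k \<in> A" for k
  proof -
    have "{l \<in> insert b A. k < l} = insert b {l \<in> A. k < l}" using insert.hyps(2) that by auto
    with insert.hyps(1) b show ?thesis by simp
  qed
  then have "(\<Sum>k\<in>A. real (card {l \<in> insert b A. k < l})) = (\<Sum>k\<in>A. real (card {l \<in> A. k < l}) + 1)"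
    by (intro sum.cong) auto
  moreover have "{l \<in> insert b A. b < l} = {}" using insert.hyps(2) by auto
  ultimately show ?case
    using insert.IH insert.hyps(1) b by (simp add: sum.distrib field_simps)
qed

lemma sum_pairs_gt:
  fixes m :: "'a \<Rightarrow> real" and c :: real
  assumes "finite A" "A \<noteq> {}" "12 \<le> c" "\<And>a. a \<in> A \<Longrightarrow> 0 \<le> m a"
    and "card A * c / 4 \<le> (\<Sum>a\<in>A. m a)"
  shows "c / 24 * (\<Sum>a\<in>A. m a) + card A * c\<^sup>2 / 100 < (\<Sum>a\<in>A. m a * (m a - 1) / 2)"
proof -
  have pointwise: "c / 6 * m a - c\<^sup>2 / 32 \<le> m a * (m a - 1) / 2 - c / 24 * m a" if "a \<in> A" for a
  proof -
    have "m a * (m a - 1) / 2 - c / 24 * m a - (c / 6 * m a - c\<^sup>2 / 32)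
        = (m a - c / 4)\<^sup>2 / 2 + m a * (c - 12) / 24"
      by (simp add: power2_eq_square field_simps)
    moreover have "0 \<le> m a * (c - 12) / 24" using assms(3,4) that by simp
    moreover have "0 \<le> (m a - c / 4)\<^sup>2 / 2" by simp
    ultimately show ?thesis by linarith
  qed
  have "(\<Sum>a\<in>A. c / 6 * m a - c\<^sup>2 / 32) \<le> (\<Sum>a\<in>A. m a * (m a - 1) / 2 - c / 24 * m a)"
    using pointwise by (rule sum_mono)
  then have "c / 6 * (\<Sum>a\<in>A. m a) - card A * c\<^sup>2 / 32
      \<le> (\<Sum>a\<in>A. m a * (m a - 1) / 2) - c / 24 * (\<Sum>a\<in>A. m a)"
    by (simp add: sum_subtractf sum_distrib_left)
  moreover have "c / 6 * (card A * c / 4) \<le> c / 6 * (\<Sum>a\<in>A. m a)"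
    using assms(3,5) by (intro mult_left_mono) auto
  moreover have "c / 6 * (card A * c / 4) = card A * c\<^sup>2 / 24" by (simp add: power2_eq_square)
  moreover have "0 < card A * c\<^sup>2" using assms(1-3) by (simp add: card_gt_0_iff)
  ultimately show ?thesis by linarith
qed

locale rich_levels =
  fixes d :: nat and E :: "bool list set set" and \<epsilon> :: real and R :: "nat set"
  assumes graph: "graph_on d E" and eps_pos: "0 < \<epsilon>" and R_levels: "R \<subseteq> {1..d}"
    and R_rich: "\<And>l. l \<in> R \<Longrightarrow> rich_level \<epsilon> d E l" and R_large: "12 \<le> \<epsilon> * card R"
begin

definition density :: "nat \<Rightarrow> bool list \<Rightarrow> real" where
  "density l v = card (back_nbrs E l v) / 2 ^ (d - l)"

definition dense_levels :: "bool list \<Rightarrow> nat set" where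
  "dense_levels v = {l \<in> R. \<epsilon> / 4 \<le> density l v}"

definition good_level :: "bool list \<Rightarrow> nat \<Rightarrow> nat \<Rightarrow> bool" where
  "good_level x k l \<longleftrightarrow>
     \<epsilon> ^ 3 / 400 * 2 ^ (d - k) \<le> card {v \<in> cube d. x \<in> back_nbrs E k v \<and> l \<in> dense_levels v}"

definition non_good_mass :: "bool list \<Rightarrow> nat \<Rightarrow> real" where
  "non_good_mass v k =
     (\<Sum>x\<in>back_nbrs E k v. real (card {l \<in> dense_levels v. \<not> good_level x k l})) / 2 ^ (d - k)"

lemma finite_R: "finite R"
  using R_levels finite_subset by blast

lemma dense_levels_subset: "dense_levels v \<subseteq> R"
  unfolding dense_levels_def by auto

lemma finite_dense_levels: "finite (dense_levels v)"
  using dense_levels_subset finite_R finite_subset by blast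

lemma density_le_one:
  assumes "v \<in> cube d"
  shows "density l v \<le> 1"
proof -
  have "card (back_nbrs E l v) \<le> 2 ^ (d - l)"
    using card_back_nbrs_le[of E l v] assms unfolding cube_def by simp
  then have "real (card (back_nbrs E l v)) \<le> 2 ^ (d - l)"
    by (metis of_nat_le_iff of_nat_numeral of_nat_power)
  then show ?thesis unfolding density_def by simp
qed

lemma sum_density_ge:
  assumes "l \<in> R"
  shows "\<epsilon> * 2 ^ (d - 1) \<le> (\<Sum>v\<in>cube d. density l v)"
proof -
  have l: "1 \<le> l" "l \<le> d" using assms R_levels by auto
  have "\<epsilon> * tau l d \<le> (\<Sum>v\<in>cube d. real (card (back_nbrs E l v)))"
    using R_rich[OF assms] e_level_eq_sum_card_back_nbrs[OF graph] unfolding rich_level_def by simp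
  moreover have "tau l d = 2 ^ (d - l) * 2 ^ (d - 1)"
    unfolding tau_def using l by (simp add: power_add[symmetric])
  ultimately show ?thesis
    unfolding density_def sum_divide_distrib[symmetric] by (simp add: field_simps)
qed

lemma sum_card_dense_levels_ge:
  "2 ^ d * (\<epsilon> * card R) / 4 \<le> (\<Sum>v\<in>cube d. real (card (dense_levels v)))"
proof -
  have density_le: "density l v \<le> of_bool (l \<in> dense_levels v) + \<epsilon> / 4"
    if "v \<in> cube d" "l \<in> R" for v l
    using density_le_one[OF that(1), of l] eps_pos that(2) unfolding dense_levels_def by auto
  have card_dense: "real (card (dense_levels v)) = (\<Sum>l\<in>R. of_bool (l \<in> dense_levels v))" for v
  proof -
    have "R \<inter> {l. l \<in> dense_levels v} = dense_levels v" using dense_levels_subset by blast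
    with finite_R show ?thesis by simp
  qed
  have "card R * (\<epsilon> * 2 ^ (d - 1)) \<le> (\<Sum>l\<in>R. \<Sum>v\<in>cube d. density l v)"
    using sum_mono[OF sum_density_ge] by simp
  also have "\<dots> = (\<Sum>v\<in>cube d. \<Sum>l\<in>R. density l v)" by (rule sum.swap)
  also have "\<dots> \<le> (\<Sum>v\<in>cube d. \<Sum>l\<in>R. of_bool (l \<in> dense_levels v) + \<epsilon> / 4)"
    using density_le by (intro sum_mono) auto
  also have "\<dots> = (\<Sum>v\<in>cube d. real (card (dense_levels v))) + 2 ^ d * (card R * \<epsilon> / 4)"
    by (simp add: sum.distrib card_dense card_cube)
  finally have "card R * (\<epsilon> * 2 ^ (d - 1))
      \<le> (\<Sum>v\<in>cube d. real (card (dense_levels v))) + 2 ^ d * (card R * \<epsilon> / 4)" .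
  moreover have "R \<noteq> {}" using R_large by auto
  then have "d \<noteq> 0" using R_levels by auto
  then have "(2::real) ^ d = 2 * 2 ^ (d - 1)" by (cases d) auto
  then have "2 ^ d * (\<epsilon> * card R) / 4 = card R * (\<epsilon> * 2 ^ (d - 1)) - 2 ^ d * (card R * \<epsilon> / 4)"
    by (simp add: algebra_simps)
  ultimately show ?thesis by linarith
qed

lemma card_later_dense_levels_le:
  assumes k: "k \<in> dense_levels v"
    and few: "\<And>x. x \<in> back_nbrs E k v \<Longrightarrow>
      card {l \<in> dense_levels v. k < l \<and> good_level x k l} \<le> \<epsilon> * card R / 24"
  shows "card {l \<in> dense_levels v. k < l} \<le> \<epsilon> * card R / 24 + 4 / \<epsilon> * non_good_mass v k"
proof -
  define N where "N = real (card (back_nbrs E k v))"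
  define later where "later = real (card {l \<in> dense_levels v. k < l})"
  define bad where "bad x = real (card {l \<in> dense_levels v. \<not> good_level x k l})" for x
  have N_ge: "\<epsilon> / 4 * 2 ^ (d - k) \<le> N"
    using k unfolding dense_levels_def density_def N_def by (simp add: field_simps)
  moreover have "0 < \<epsilon> / 4 * 2 ^ (d - k)" using eps_pos by simp
  ultimately have N_pos: "0 < N" by linarith
  have "later \<le> \<epsilon> * card R / 24 + bad x" if "x \<in> back_nbrs E k v" for x
  proof -
    have "card {l \<in> dense_levels v. k < l}
        \<le> card ({l \<in> dense_levels v. k < l \<and> good_level x k l}
            \<union> {l \<in> dense_levels v. \<not> good_level x k l})"
      using finite_dense_levels by (intro card_mono) auto
    also have "\<dots> \<le> card {l \<in> dense_levels v. k < l \<and> good_level x k l}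
        + card {l \<in> dense_levels v. \<not> good_level x k l}"
      by (rule card_Un_le)
    finally have "later \<le> card {l \<in> dense_levels v. k < l \<and> good_level x k l} + bad x"
      unfolding later_def bad_def by linarith
    with few[OF that] show ?thesis by linarith
  qed
  then have "(\<Sum>x\<in>back_nbrs E k v. later) \<le> (\<Sum>x\<in>back_nbrs E k v. \<epsilon> * card R / 24 + bad x)"
    by (rule sum_mono)
  then have "N * later \<le> N * (\<epsilon> * card R / 24) + (\<Sum>x\<in>back_nbrs E k v. bad x)"
    unfolding N_def by (simp add: sum.distrib)
  then have "later \<le> \<epsilon> * card R / 24 + (\<Sum>x\<in>back_nbrs E k v. bad x) / N"
    using N_pos by (simp add: field_simps)
  also have "(\<Sum>x\<in>back_nbrs E k v. bad x) / N \<le> (\<Sum>x\<in>back_nbrs E k v. bad x) / (\<epsilon> / 4 * 2 ^ (d - k))"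
    using N_ge N_pos eps_pos by (intro divide_left_mono sum_nonneg) (auto simp: bad_def)
  also have "\<dots> = 4 / \<epsilon> * non_good_mass v k"
    unfolding non_good_mass_def bad_def by simp
  finally show ?thesis unfolding later_def by simp
qed

definition non_good_weight :: "bool list \<Rightarrow> nat \<Rightarrow> bool list \<Rightarrow> nat \<Rightarrow> real" where
  "non_good_weight v k x l =
     of_bool (x \<in> back_nbrs E k v \<and> l \<in> dense_levels v \<and> \<not> good_level x k l) / 2 ^ (d - k)"

lemma non_good_weight_nonneg: "0 \<le> non_good_weight v k x l"
  unfolding non_good_weight_def by simp

lemma non_good_mass_le_sum_weight:
  assumes "v \<in> cube d"
  shows "non_good_mass v k \<le> (\<Sum>x\<in>cube d. \<Sum>l\<in>R. non_good_weight v k x l)"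
proof -
  have "real (card {l \<in> dense_levels v. \<not> good_level x k l}) / 2 ^ (d - k)
      = (\<Sum>l\<in>R. non_good_weight v k x l)"
    if "x \<in> back_nbrs E k v" for x
  proof -
    have "R \<inter> {l. l \<in> dense_levels v \<and> \<not> good_level x k l}
        = {l \<in> dense_levels v. \<not> good_level x k l}"
      using dense_levels_subset by blast
    with that finite_R show ?thesis unfolding non_good_weight_def by (simp flip: sum_divide_distrib)
  qed
  then have "non_good_mass v k = (\<Sum>x\<in>back_nbrs E k v. \<Sum>l\<in>R. non_good_weight v k x l)"
    unfolding non_good_mass_def sum_divide_distrib by (rule sum.cong[OF refl])
  also have "\<dots> \<le> (\<Sum>x\<in>cube d. \<Sum>l\<in>R. non_good_weight v k x l)"
    using back_nbrs_subset_cube[of E k v] assms finite_cube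
    by (intro sum_mono2 sum_nonneg non_good_weight_nonneg) (auto simp: cube_def)
  finally show ?thesis .
qed

lemma sum_non_good_weight_le: "(\<Sum>v\<in>cube d. non_good_weight v k x l) \<le> \<epsilon> ^ 3 / 400"
proof (cases "good_level x k l")
  case True
  then show ?thesis unfolding non_good_weight_def using eps_pos by simp
next
  case False
  have "cube d \<inter> {v. x \<in> back_nbrs E k v \<and> l \<in> dense_levels v}
      = {v \<in> cube d. x \<in> back_nbrs E k v \<and> l \<in> dense_levels v}"
    by blast
  then have "(\<Sum>v\<in>cube d. non_good_weight v k x l)
      = card {v \<in> cube d. x \<in> back_nbrs E k v \<and> l \<in> dense_levels v} / 2 ^ (d - k)"
    using False finite_cube unfolding non_good_weight_def by (simp flip: sum_divide_distrib)
  also have "\<dots> \<le> \<epsilon> ^ 3 / 400"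
    using False unfolding good_level_def by (simp add: pos_divide_le_eq)
  finally show ?thesis .
qed

lemma sum_non_good_mass_le:
  "(\<Sum>v\<in>cube d. \<Sum>k\<in>dense_levels v. non_good_mass v k) \<le> card R * card R * 2 ^ d * (\<epsilon> ^ 3 / 400)"
proof -
  let ?w = non_good_weight
  have "(\<Sum>v\<in>cube d. \<Sum>k\<in>dense_levels v. non_good_mass v k)
      \<le> (\<Sum>v\<in>cube d. \<Sum>k\<in>dense_levels v. \<Sum>x\<in>cube d. \<Sum>l\<in>R. ?w v k x l)"
    using non_good_mass_le_sum_weight by (intro sum_mono) auto
  also have "\<dots> \<le> (\<Sum>v\<in>cube d. \<Sum>k\<in>R. \<Sum>x\<in>cube d. \<Sum>l\<in>R. ?w v k x l)"
    using finite_R dense_levels_subset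
    by (intro sum_mono sum_mono2 sum_nonneg non_good_weight_nonneg) auto
  also have "\<dots> = (\<Sum>k\<in>R. \<Sum>v\<in>cube d. \<Sum>x\<in>cube d. \<Sum>l\<in>R. ?w v k x l)"
    by (rule sum.swap)
  also have "\<dots> = (\<Sum>k\<in>R. \<Sum>x\<in>cube d. \<Sum>v\<in>cube d. \<Sum>l\<in>R. ?w v k x l)"
    by (intro sum.cong refl sum.swap)
  also have "\<dots> = (\<Sum>k\<in>R. \<Sum>x\<in>cube d. \<Sum>l\<in>R. \<Sum>v\<in>cube d. ?w v k x l)"
    by (intro sum.cong refl sum.swap)
  also have "\<dots> \<le> (\<Sum>k\<in>R. \<Sum>x\<in>cube d. \<Sum>l\<in>R. \<epsilon> ^ 3 / 400)"
    using sum_non_good_weight_le by (intro sum_mono)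
  also have "\<dots> = card R * card R * 2 ^ d * (\<epsilon> ^ 3 / 400)"
    by (simp add: card_cube)
  finally show ?thesis .
qed

lemma sum_pairs_dense_levels_le:
  assumes few: "\<And>v k x. v \<in> cube d \<Longrightarrow> k \<in> dense_levels v \<Longrightarrow> x \<in> back_nbrs E k v \<Longrightarrow>
      card {l \<in> dense_levels v. k < l \<and> good_level x k l} \<le> \<epsilon> * card R / 24"
  shows "(\<Sum>v\<in>cube d. real (card (dense_levels v)) * (real (card (dense_levels v)) - 1) / 2)
    \<le> \<epsilon> * card R / 24 * (\<Sum>v\<in>cube d. real (card (dense_levels v))) + 2 ^ d * (\<epsilon> * card R)\<^sup>2 / 100"
proof -
  have per_vertex: "real (card (dense_levels v)) * (real (card (dense_levels v)) - 1) / 2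
      \<le> \<epsilon> * card R / 24 * real (card (dense_levels v))
        + 4 / \<epsilon> * (\<Sum>k\<in>dense_levels v. non_good_mass v k)"
    if v: "v \<in> cube d" for v
  proof -
    have "real (card (dense_levels v)) * (real (card (dense_levels v)) - 1) / 2
        = (\<Sum>k\<in>dense_levels v. real (card {l \<in> dense_levels v. k < l}))"
      using sum_card_greater[OF finite_dense_levels] by simp
    also have "\<dots> \<le> (\<Sum>k\<in>dense_levels v. \<epsilon> * card R / 24 + 4 / \<epsilon> * non_good_mass v k)"
    proof (rule sum_mono)
      fix k assume k: "k \<in> dense_levels v"
      show "real (card {l \<in> dense_levels v. k < l}) \<le> \<epsilon> * card R / 24 + 4 / \<epsilon> * non_good_mass v k"
        using k few[OF v k] by (rule card_later_dense_levels_le)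
    qed
    also have "\<dots> = \<epsilon> * card R / 24 * real (card (dense_levels v))
        + 4 / \<epsilon> * (\<Sum>k\<in>dense_levels v. non_good_mass v k)"
      by (simp add: sum.distrib sum_distrib_left)
    finally show ?thesis .
  qed
  have "(\<Sum>v\<in>cube d. real (card (dense_levels v)) * (real (card (dense_levels v)) - 1) / 2)
      \<le> (\<Sum>v\<in>cube d. \<epsilon> * card R / 24 * real (card (dense_levels v))
        + 4 / \<epsilon> * (\<Sum>k\<in>dense_levels v. non_good_mass v k))"
    using per_vertex by (rule sum_mono)
  also have "\<dots> = \<epsilon> * card R / 24 * (\<Sum>v\<in>cube d. real (card (dense_levels v)))
      + 4 / \<epsilon> * (\<Sum>v\<in>cube d. \<Sum>k\<in>dense_levels v. non_good_mass v k)"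
    by (simp add: sum.distrib sum_distrib_left)
  also have "\<dots> \<le> \<epsilon> * card R / 24 * (\<Sum>v\<in>cube d. real (card (dense_levels v)))
      + 4 / \<epsilon> * (card R * card R * 2 ^ d * (\<epsilon> ^ 3 / 400))"
    using sum_non_good_mass_le eps_pos by (intro add_left_mono mult_left_mono) auto
  also have "4 / \<epsilon> * (card R * card R * 2 ^ d * (\<epsilon> ^ 3 / 400)) = 2 ^ d * (\<epsilon> * card R)\<^sup>2 / 100"
    using eps_pos by (simp add: power2_eq_square power3_eq_cube)
  finally show ?thesis .
qed

lemma exists_many_good_levels:
  obtains v k x where "v \<in> cube d" "k \<in> dense_levels v" "x \<in> back_nbrs E k v"
    "\<epsilon> * card R / 24 < card {l \<in> dense_levels v. k < l \<and> good_level x k l}"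
proof (rule ccontr)
  assume "\<not> thesis"
  with that have few: "\<And>v k x. v \<in> cube d \<Longrightarrow> k \<in> dense_levels v \<Longrightarrow> x \<in> back_nbrs E k v \<Longrightarrow>
      card {l \<in> dense_levels v. k < l \<and> good_level x k l} \<le> \<epsilon> * card R / 24"
    by (meson not_less)
  define m where "m v = real (card (dense_levels v))" for v
  have "replicate d False \<in> cube d" by (simp add: cube_def)
  then have "\<epsilon> * card R / 24 * (\<Sum>v\<in>cube d. m v) + card (cube d) * (\<epsilon> * card R)\<^sup>2 / 100
      < (\<Sum>v\<in>cube d. m v * (m v - 1) / 2)"
    using sum_card_dense_levels_ge R_large finite_cube unfolding m_def
    by (intro sum_pairs_gt) (auto simp: card_cube)
  with sum_pairs_dense_levels_le[OF few] show False unfolding m_def by (simp add: card_cube)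
qed

lemma rich_level_fan_if_good:
  assumes "k < l" "l \<in> R" "good_level x k l"
  shows "rich_level (\<epsilon> ^ 4 / 800) (d - k) (shift_graph k (fan_subgraph E x k)) (l - k)"
proof -
  define T where "T = {v \<in> cube d. x \<in> back_nbrs E k v \<and> l \<in> dense_levels v}"
  have "l \<le> d" using assms(2) R_levels by auto
  have "\<epsilon> ^ 3 / 400 * 2 ^ (d - k) * (\<epsilon> / 4 * 2 ^ (d - l)) \<le> card T * (\<epsilon> / 4 * 2 ^ (d - l))"
    using assms(3) eps_pos unfolding good_level_def T_def by (intro mult_right_mono) auto
  also have "\<dots> \<le> (\<Sum>v\<in>T. real (card (back_nbrs E l v)))"
  proof -
    have "\<epsilon> / 4 * 2 ^ (d - l) \<le> real (card (back_nbrs E l v))" if "v \<in> T" for v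
      using that unfolding T_def dense_levels_def density_def by (simp add: field_simps)
    then show ?thesis using sum_mono[of T "\<lambda>_. \<epsilon> / 4 * 2 ^ (d - l)"] by simp
  qed
  also have "\<dots> \<le> e_level (shift_graph k (fan_subgraph E x k)) (l - k)"
  proof -
    have "T \<subseteq> {v \<in> cube d. x \<in> back_nbrs E k v}" unfolding T_def by blast
    from sum_card_back_nbrs_le_e_level_fan[OF graph assms(1) this]
    have "real (\<Sum>v\<in>T. card (back_nbrs E l v))
        \<le> real (e_level (shift_graph k (fan_subgraph E x k)) (l - k))"
      by (rule of_nat_mono)
    then show ?thesis by simp
  qed
  finally have "\<epsilon> ^ 3 / 400 * 2 ^ (d - k) * (\<epsilon> / 4 * 2 ^ (d - l))
      \<le> e_level (shift_graph k (fan_subgraph E x k)) (l - k)" .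
  moreover have "(d - k) + (d - l) = Suc (2 * (d - k) - (l - k) - 1)"
    using assms(1) \<open>l \<le> d\<close> by auto
  then have "(2::real) ^ (d - k) * 2 ^ (d - l) = 2 * tau (l - k) (d - k)"
    unfolding tau_def by (metis power_add power_Suc)
  then have "\<epsilon> ^ 3 / 400 * 2 ^ (d - k) * (\<epsilon> / 4 * 2 ^ (d - l)) = \<epsilon> ^ 4 / 800 * tau (l - k) (d - k)"
    by (simp add: field_simps eval_nat_numeral)
  ultimately show ?thesis unfolding rich_level_def by linarith
qed

lemma exists_rich_fan:
  obtains v x k where "v \<in> cube d" "x \<in> back_nbrs E k v"
    "rich (\<epsilon> ^ 4 / 800) (\<epsilon> * card R / 24) (d - k) (shift_graph k (fan_subgraph E x k))"
proof -
  obtain v k x where v: "v \<in> cube d" "k \<in> dense_levels v" "x \<in> back_nbrs E k v"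
    and many: "\<epsilon> * card R / 24 < card {l \<in> dense_levels v. k < l \<and> good_level x k l}"
    by (rule exists_many_good_levels)
  have "rich (\<epsilon> ^ 4 / 800) (\<epsilon> * card R / 24) (d - k) (shift_graph k (fan_subgraph E x k))"
  proof (rule rich_if_card_levels)
    show "{l \<in> dense_levels v. k < l \<and> good_level x k l} \<subseteq> {k<..d}"
      using dense_levels_subset[of v] R_levels by auto
    show "rich_level (\<epsilon> ^ 4 / 800) (d - k) (shift_graph k (fan_subgraph E x k)) (l - k)"
      if "l \<in> {l \<in> dense_levels v. k < l \<and> good_level x k l}" for l
      using that dense_levels_subset by (intro rich_level_fan_if_good) auto
  qed (use many in simp)
  with v(1,3) show thesis by (rule that)
qed

end

lemma rich_graph_has_fan:
  assumes "0 < \<epsilon>" "12 / \<epsilon> \<le> C" "graph_on d E" "rich \<epsilon> C d E"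
  shows "\<exists>a p x G'. a < d \<and> length p = a \<and> x \<in> lhs d a p \<and>
    G' \<subseteq> E \<and> (\<forall>e\<in>G'. e \<subseteq> rhs d a p) \<and>
    rich (\<epsilon> ^ 4 / 800) (\<epsilon> * C / 24) (d - a - 1) (shift_graph (a + 1) G') \<and>
    (\<forall>u v. {u, v} \<in> G' \<and> lex_less u v \<longrightarrow> v \<in> fwd_nbrs E x)"
proof -
  define R where "R = {l \<in> {1..d}. rich_level \<epsilon> d E l}"
  have C_le: "C \<le> card R" using assms(4) unfolding rich_def R_def by simp
  have "12 \<le> \<epsilon> * C" using assms(1,2) by (simp add: field_simps)
  also have "\<dots> \<le> \<epsilon> * card R" using C_le assms(1) by simp
  finally interpret rich_levels d E \<epsilon> R
    using assms(1,3) unfolding R_def by unfold_locales auto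
  obtain v x k where v: "v \<in> cube d" and x: "x \<in> back_nbrs E k v"
    and rich_fan:
      "rich (\<epsilon> ^ 4 / 800) (\<epsilon> * card R / 24) (d - k) (shift_graph k (fan_subgraph E x k))"
    by (rule exists_rich_fan)
  have xv: "lex_less_at x v k" using x unfolding back_nbrs_def by simp
  then have k: "1 \<le> k" "k \<le> d" and "x \<in> cube d" using v unfolding lex_less_at_def cube_def by auto
  show ?thesis
  proof (intro exI conjI)
    show "k - 1 < d" "length (take (k - 1) x) = k - 1" using k \<open>x \<in> cube d\<close> by (auto simp: cube_def)
    show "x \<in> lhs d (k - 1) (take (k - 1) x)"
      using xv \<open>x \<in> cube d\<close> by (rule lex_less_at_lower_in_lhs)
    show "fan_subgraph E x k \<subseteq> E" by (rule fan_subgraph_subset)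
    show "\<forall>e\<in>fan_subgraph E x k. e \<subseteq> rhs d (k - 1) (take (k - 1) x)"
      using fan_subgraph_in_rhs[OF graph] by blast
    have "\<epsilon> * C / 24 \<le> \<epsilon> * card R / 24" using C_le eps_pos by simp
    with rich_fan k(1) show "rich (\<epsilon> ^ 4 / 800) (\<epsilon> * C / 24) (d - (k - 1) - 1)
        (shift_graph (k - 1 + 1) (fan_subgraph E x k))"
      unfolding rich_def by simp
    show "\<forall>u v. {u, v} \<in> fan_subgraph E x k \<and> lex_less u v \<longrightarrow> v \<in> fwd_nbrs E x"
      using fan_subgraph_upper_in_fwd_nbrs by blast
  qed
qed

theorem lemma4p3:
  shows "\<forall>\<epsilon>::real. \<epsilon> > 0 \<longrightarrow> (\<exists>\<eta>::real. \<eta> > 0 \<and>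
     (\<forall>C::real. C \<ge> 12 / \<epsilon> \<longrightarrow>
       (\<forall>(d::nat) (E::bool list set set). graph_on d E \<and> rich \<epsilon> C d E \<longrightarrow>
         (\<exists>a p x G'. a < d \<and> length p = a \<and> x \<in> lhs d a p \<and>
            G' \<subseteq> E \<and> (\<forall>e\<in>G'. e \<subseteq> rhs d a p) \<and>
            rich \<eta> (\<epsilon> * C / 24) (d - a - 1) (shift_graph (a + 1) G') \<and>
            (\<forall>u v. {u, v} \<in> G' \<and> lex_less u v \<longrightarrow> v \<in> fwd_nbrs E x)))))"
  apply (intro allI impI)
  subgoal for \<epsilon>
    using rich_graph_has_fan[of \<epsilon>] by (intro exI[of _ "\<epsilon> ^ 4 / 800"]) auto
  done

end
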